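(* Let $Y(1),Y(2),\dots$ be i.i.d. real random variables with $\mathbf E Y(1)=0$, and let $T(n)=Y(1)+\dots+Y(n)$. Fix $p\ge1$ and assume $\mathbf E|Y(1)|^q<\infty$ for some $q\ge\max(p,2)$. Let $(\mathcal F_k)_{k\ge0}$ be a filtration such that each $Y(k)$ is $\mathcal F_k$-measurable and independent of $\mathcal F_{k-1}$, and let $\sigma$ be a stopping time with respect to $(\mathcal F_k)$. Then for every $r>\max\big(\frac{p-1}{2},1\big)$, every $t>0$ and every $n\ge1$, $$\mathbf E\big[(T(n))^{p-1};\,T(n)>t,\ \sigma>n\big]\le r^q\frac{q}{q+1-p}\mathbf E|Y(1)|^q\,t^{p-1-q}\sum_{i=1}^n\mathbf P(\sigma>i-1)+\big(er\,\mathbf E Y(1)^2\big)^r n^r\frac{2r}{2r+1-p}\,t^{p-1-2r}.$$ *)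

theory Defs
  imports "HOL-Probability.Probability"
begin

definition stopping_time_enat :: "(nat \<Rightarrow> 'a measure) \<Rightarrow> ('a \<Rightarrow> enat) \<Rightarrow> bool" where
  "stopping_time_enat F \<sigma> \<longleftrightarrow> (\<forall>k::nat. Measurable.pred (F k) (\<lambda>x. \<sigma> x \<le> enat k))"

end

theory Submission
  imports Defs
begin

(* Split the event {sigma > n, T n >= x} according to whether some summand Y i, i <= n,
   exceeds y = x / r. If Y i > y, then also sigma > i - 1; the event {sigma > i - 1} lies in
   F (i - 1) and is therefore independent of Y i, so this case costs at most
   P(Y 1 > y) P(sigma > i - 1) <= r^q E|Y 1|^q x^-q P(sigma > i - 1) by Markov's inequality.
   Otherwise the sum of the truncated summands min (Y i) y exceeds x, and a Chernoff bound,
   based on exp (h u) <= 1 + h u + K u^2 for u <= y and optimised in h, gives the bound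
   (e r E Y^2 n)^r x^(-2 r). Integrating this tail bound against (p - 1) x^(p - 2) over
   [t, oo) (layer-cake formula) produces the two terms of the estimate. *)

section \<open>Elementary exponential inequalities\<close>

lemma exp_Taylor_remainder_scale_le:
  fixes a l :: real
  assumes a: "0 \<le> a" and l: "0 \<le> l" "l \<le> 1"
  shows "exp (l * a) - 1 - l * a \<le> l\<^sup>2 * (exp a - 1 - a)"
proof -
  have s1: "(\<lambda>n. (l*a)^(n+2) /\<^sub>R fact (n+2)) sums (exp (l*a) - (\<Sum>i<2. (l*a)^i /\<^sub>R fact i))"
    using sums_split_initial_segment[OF exp_converges[of "l*a"], of 2] by simp
  have s2: "(\<lambda>n. l\<^sup>2 * (a^(n+2) /\<^sub>R fact (n+2))) sums (l\<^sup>2 * (exp a - (\<Sum>i<2. a^i /\<^sub>R fact i)))"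
    using sums_mult[OF sums_split_initial_segment[OF exp_converges[of a], of 2]] by simp
  have "(l*a)^(n+2) /\<^sub>R fact (n+2) \<le> l\<^sup>2 * (a^(n+2) /\<^sub>R fact (n+2))" for n
  proof -
    have "l^(n+2) * a^(n+2) \<le> l\<^sup>2 * a^(n+2)"
      using a l by (intro mult_right_mono power_decreasing) auto
    then have "(l*a)^(n+2) \<le> l\<^sup>2 * a^(n+2)" by (simp only: power_mult_distrib)
    then show ?thesis by (simp add: divide_right_mono)
  qed
  then have "exp (l*a) - (\<Sum>i<2. (l*a)^i /\<^sub>R fact i) \<le> l\<^sup>2 * (exp a - (\<Sum>i<2. a^i /\<^sub>R fact i))"
    using s1 s2 by (rule sums_le)
  then show ?thesis by (simp add: numeral_2_eq_2 algebra_simps)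
qed

lemma exp_upper_Taylor_quadratic_nonpos:
  fixes s :: real
  assumes "s \<le> 0"
  shows "exp s \<le> 1 + s + s\<^sup>2 / 2"
proof -
  let ?f = "\<lambda>x::real. exp x - 1 - x - x\<^sup>2 / 2"
  have "?f s \<le> ?f 0"
  proof (rule DERIV_nonneg_imp_nondecreasing[OF assms])
    fix x :: real
    have "0 \<le> exp x - 1 - x" using exp_ge_add_one_self[of x] by linarith
    then show "\<exists>y. (?f has_real_derivative y) (at x) \<and> 0 \<le> y"
      by (intro exI[of _ "exp x - 1 - x"]) (auto intro!: derivative_eq_intros)
  qed
  then show ?thesis by simp
qed

text \<open>For \<open>0 \<le> u \<le> y\<close> this says that \<open>(exp v - 1 - v) / v\<^sup>2\<close> is increasing in \<open>v > 0\<close>.\<close>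

lemma exp_mult_le_quadratic_of_le:
  fixes h y u :: real
  assumes h: "h > 0" and y: "y > 0" and u: "u \<le> y"
  shows "exp (h * u) \<le> 1 + h * u + (exp (h * y) - 1 - h * y) / y\<^sup>2 * u\<^sup>2"
proof (cases "u \<le> 0")
  case True
  have "exp (h * u) \<le> 1 + h * u + (h * u)\<^sup>2 / 2"
    using True h by (intro exp_upper_Taylor_quadratic_nonpos) (simp add: mult_nonneg_nonpos)
  also have "(h * u)\<^sup>2 / 2 = (h * y)\<^sup>2 / 2 / y\<^sup>2 * u\<^sup>2"
    using y by (simp add: field_simps power2_eq_square)
  also have "\<dots> \<le> (exp (h * y) - 1 - h * y) / y\<^sup>2 * u\<^sup>2"
    using exp_lower_Taylor_quadratic[of "h * y"] h y by (intro mult_right_mono divide_right_mono) auto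
  finally show ?thesis by simp
next
  case False
  define l where "l = u / y"
  have "0 \<le> l" "l \<le> 1" using False u y by (auto simp: l_def)
  then have "exp (l * (h * y)) - 1 - l * (h * y) \<le> l\<^sup>2 * (exp (h * y) - 1 - h * y)"
    using h y by (intro exp_Taylor_remainder_scale_le) auto
  moreover have "l * (h * y) = h * u" "l\<^sup>2 = u\<^sup>2 / y\<^sup>2"
    using y by (auto simp: l_def power_divide)
  ultimately have "exp (h * u) - 1 - h * u \<le> u\<^sup>2 / y\<^sup>2 * (exp (h * y) - 1 - h * y)"
    by simp
  then show ?thesis by (simp add: field_simps)
qed

section \<open>Layer-cake formula\<close>

lemma ennreal_powr_FTC:
  fixes p t z :: real
  assumes p: "p \<ge> 1" and t: "t > 0" and tz: "t \<le> z"
  shows "ennreal (z powr (p-1))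
    = ennreal (t powr (p-1)) + (\<integral>\<^sup>+x. ennreal ((p-1) * x powr (p-2)) * indicator {t..z} x \<partial>lborel)"
proof -
  have "(\<integral>\<^sup>+x. ennreal ((p-1) * x powr (p-2)) * indicator {t..z} x \<partial>lborel)
      = ennreal (z powr (p-1) - t powr (p-1))"
  proof (rule nn_integral_FTC_Icc)
    fix x assume "x \<in> {t..z}"
    then have "x > 0" using t by auto
    then show "((\<lambda>x. x powr (p-1)) has_real_derivative (p-1) * x powr (p-2)) (at x)"
      by (auto intro!: derivative_eq_intros)
  qed (use p tz in auto)
  moreover have "t powr (p-1) \<le> z powr (p-1)" using tz t p by (intro powr_mono2) auto
  ultimately show ?thesis by (simp add: ennreal_plus[symmetric] del: ennreal_plus)
qed

lemma nn_integral_powr_tail: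
  fixes c a p t :: real
  assumes c: "c \<ge> 0" and a: "a > p - 1" and p: "p \<ge> 1" and t: "t > 0"
  shows "(\<integral>\<^sup>+x. ennreal ((p-1) * x powr (p-2) * (c * x powr (-a))) * indicator {t..} x \<partial>lborel)
    = ennreal (c * (p-1) / (a+1-p) * t powr (p-1-a))"
proof -
  define F where "F x = - (c * (p-1) / (a+1-p) * x powr (p-1-a))" for x :: real
  have "a + 1 - p \<noteq> 0" using a by linarith
  have "(\<integral>\<^sup>+x. ennreal ((p-1) * x powr (p-2) * (c * x powr (-a))) * indicator {t..} x \<partial>lborel) = 0 - F t"
  proof (rule nn_integral_FTC_atLeast)
    fix x assume "t \<le> x"
    then have x: "x > 0" using t by linarith
    show "0 \<le> (p-1) * x powr (p-2) * (c * x powr (-a))" using p c by simp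
    have "(F has_real_derivative - (c * (p-1) / (a+1-p) * ((p-1-a) * x powr (p-1-a-1)))) (at x)"
      unfolding F_def using x \<open>a + 1 - p \<noteq> 0\<close> by (auto intro!: derivative_eq_intros)
    moreover have "- (c * (p-1) / (a+1-p) * ((p-1-a) * x powr (p-1-a-1)))
        = (p-1) * x powr (p-2) * (c * x powr (-a))"
    proof -
      have "x powr (p-1-a-1) = x powr (p-2) * x powr (-a)" by (simp add: powr_add[symmetric] algebra_simps)
      then show ?thesis using \<open>a + 1 - p \<noteq> 0\<close> by (simp add: field_simps)
    qed
    ultimately show "(F has_real_derivative (p-1) * x powr (p-2) * (c * x powr (-a))) (at x)" by simp
  next
    have "((\<lambda>x::real. x powr (p-1-a)) \<longlongrightarrow> 0) at_top"
      using a by (intro tendsto_neg_powr filterlim_ident) auto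
    then have "(F \<longlongrightarrow> - (c * (p-1) / (a+1-p) * 0)) at_top"
      unfolding F_def by (intro tendsto_intros)
    then show "(F \<longlongrightarrow> 0) at_top" by simp
  qed measurable
  then show ?thesis by (simp add: F_def)
qed

lemma (in sigma_finite_measure) nn_integral_indicator_powr_eq:
  fixes Z :: "'a \<Rightarrow> real" and P :: "'a \<Rightarrow> bool"
  assumes [measurable]: "Z \<in> borel_measurable M" "Measurable.pred M P"
    and p: "p \<ge> 1" and t: "t > 0"
  shows "(\<integral>\<^sup>+\<omega>. indicator {\<omega>. t < Z \<omega> \<and> P \<omega>} \<omega> * ennreal (Z \<omega> powr (p-1)) \<partial>M)
    = ennreal (t powr (p-1)) * emeasure M {\<omega>\<in>space M. t < Z \<omega> \<and> P \<omega>}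
      + (\<integral>\<^sup>+x. ennreal ((p-1) * x powr (p-2)) * indicator {t..} x
           * emeasure M {\<omega>\<in>space M. P \<omega> \<and> t < Z \<omega> \<and> x \<le> Z \<omega>} \<partial>lborel)"
proof -
  let ?g = "\<lambda>x::real. ennreal ((p-1) * x powr (p-2)) * indicator {t..} x"
  let ?E = "\<lambda>x. {\<omega>\<in>space M. P \<omega> \<and> t < Z \<omega> \<and> x \<le> Z \<omega>}"
  have pointwise: "indicator {\<omega>. t < Z \<omega> \<and> P \<omega>} \<omega> * ennreal (Z \<omega> powr (p-1))
      = ennreal (t powr (p-1)) * indicator {\<omega>\<in>space M. t < Z \<omega> \<and> P \<omega>} \<omega>
        + (\<integral>\<^sup>+x. ?g x * indicator (?E x) \<omega> \<partial>lborel)" if \<omega>: "\<omega> \<in> space M" for \<omega>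
  proof (cases "t < Z \<omega> \<and> P \<omega>")
    case True
    have "(\<integral>\<^sup>+x. ?g x * indicator (?E x) \<omega> \<partial>lborel)
        = (\<integral>\<^sup>+x. ennreal ((p-1) * x powr (p-2)) * indicator {t..Z \<omega>} x \<partial>lborel)"
      using True \<omega> by (intro nn_integral_cong) (auto simp: indicator_def)
    then show ?thesis using True \<omega> ennreal_powr_FTC[OF p t, of "Z \<omega>"] by simp
  qed (auto simp: indicator_def)
  have "(\<integral>\<^sup>+\<omega>. indicator {\<omega>. t < Z \<omega> \<and> P \<omega>} \<omega> * ennreal (Z \<omega> powr (p-1)) \<partial>M)
      = (\<integral>\<^sup>+\<omega>. ennreal (t powr (p-1)) * indicator {\<omega>\<in>space M. t < Z \<omega> \<and> P \<omega>} \<omega>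
          + (\<integral>\<^sup>+x. ?g x * indicator (?E x) \<omega> \<partial>lborel) \<partial>M)"
    by (intro nn_integral_cong pointwise)
  also have "\<dots> = ennreal (t powr (p-1)) * emeasure M {\<omega>\<in>space M. t < Z \<omega> \<and> P \<omega>}
      + (\<integral>\<^sup>+\<omega>. (\<integral>\<^sup>+x. ?g x * indicator (?E x) \<omega> \<partial>lborel) \<partial>M)"
    by (subst nn_integral_add) (measurable, simp add: nn_integral_cmult_indicator)
  also have "(\<integral>\<^sup>+\<omega>. (\<integral>\<^sup>+x. ?g x * indicator (?E x) \<omega> \<partial>lborel) \<partial>M)
      = (\<integral>\<^sup>+x. (\<integral>\<^sup>+\<omega>. ?g x * indicator (?E x) \<omega> \<partial>M) \<partial>lborel)"
  proof -
    interpret pair_sigma_finite M lborel ..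
    show ?thesis by (rule Fubini'[symmetric]) measurable
  qed
  also have "\<dots> = (\<integral>\<^sup>+x. ?g x * emeasure M (?E x) \<partial>lborel)"
    by (intro nn_integral_cong nn_integral_cmult_indicator) measurable
  finally show ?thesis .
qed

lemma nn_integral_powr_two_tails:
  fixes A C a b p t :: real
  assumes A: "A \<ge> 0" and C: "C \<ge> 0" and a: "a > p - 1" and b: "b > p - 1"
    and p: "p \<ge> 1" and t: "t > 0"
  shows "(\<integral>\<^sup>+x. ennreal ((p-1) * x powr (p-2)) * indicator {t..} x
            * ennreal (A * x powr (-a) + C * x powr (-b)) \<partial>lborel)
    = ennreal (A * (p-1) / (a+1-p) * t powr (p-1-a)) + ennreal (C * (p-1) / (b+1-p) * t powr (p-1-b))"
proof -
  have "(\<integral>\<^sup>+x. ennreal ((p-1) * x powr (p-2)) * indicator {t..} x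
            * ennreal (A * x powr (-a) + C * x powr (-b)) \<partial>lborel)
      = (\<integral>\<^sup>+x. ennreal ((p-1) * x powr (p-2) * (A * x powr (-a))) * indicator {t..} x
           + ennreal ((p-1) * x powr (p-2) * (C * x powr (-b))) * indicator {t..} x \<partial>lborel)"
    using p A C by (intro nn_integral_cong) (auto split: split_indicator
      simp: ennreal_mult[symmetric] ennreal_plus[symmetric] distrib_left simp del: ennreal_plus)
  also have "\<dots> = ennreal (A * (p-1) / (a+1-p) * t powr (p-1-a)) + ennreal (C * (p-1) / (b+1-p) * t powr (p-1-b))"
    by (simp add: nn_integral_add nn_integral_powr_tail A C a b p t)
  finally show ?thesis .
qed

lemma powr_layer_cake_coeff:
  fixes A a p t :: real
  assumes a: "a > p - 1"
  shows "t powr (p-1) * (A * t powr (-a)) + A * (p-1) / (a+1-p) * t powr (p-1-a)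
    = A * (a / (a+1-p)) * t powr (p-1-a)"
proof -
  have "a + 1 - p \<noteq> 0" using a by linarith
  then have coeff: "A * u + A * (p-1) / (a+1-p) * u = A * (a / (a+1-p)) * u" for u
    by (simp add: field_simps)
  have "t powr (p-1) * t powr (-a) = t powr (p-1-a)"
    by (simp add: powr_add[symmetric])
  then have "t powr (p-1) * (A * t powr (-a)) = A * t powr (p-1-a)"
    by (metis mult.left_commute)
  then show ?thesis unfolding coeff[symmetric] by simp
qed

lemma (in prob_space) nn_integral_indicator_powr_le:
  fixes Z :: "'a \<Rightarrow> real" and P :: "'a \<Rightarrow> bool"
  assumes [measurable]: "Z \<in> borel_measurable M" "Measurable.pred M P"
    and p: "p \<ge> 1" and t: "t > 0" and A: "A \<ge> 0" and C: "C \<ge> 0"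
    and a: "a > p - 1" and b: "b > p - 1"
    and tail: "\<And>x. x \<ge> t \<Longrightarrow> prob {\<omega>\<in>space M. P \<omega> \<and> x \<le> Z \<omega>} \<le> A * x powr (-a) + C * x powr (-b)"
  shows "(\<integral>\<^sup>+\<omega>. indicator {\<omega>. t < Z \<omega> \<and> P \<omega>} \<omega> * ennreal (Z \<omega> powr (p-1)) \<partial>M)
    \<le> ennreal (A * (a / (a+1-p)) * t powr (p-1-a) + C * (b / (b+1-p)) * t powr (p-1-b))"
proof -
  let ?E = "\<lambda>x. {\<omega>\<in>space M. P \<omega> \<and> t < Z \<omega> \<and> x \<le> Z \<omega>}"
  have E_le: "emeasure M (?E x) \<le> ennreal (A * x powr (-a) + C * x powr (-b))" if "t \<le> x" for x
  proof -
    have "emeasure M (?E x) \<le> emeasure M {\<omega>\<in>space M. P \<omega> \<and> x \<le> Z \<omega>}"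
      by (intro emeasure_mono) auto
    also have "\<dots> \<le> ennreal (A * x powr (-a) + C * x powr (-b))"
      using tail[OF that] by (simp add: emeasure_eq_measure ennreal_leI)
    finally show ?thesis .
  qed
  have "{\<omega>\<in>space M. t < Z \<omega> \<and> P \<omega>} = ?E t" by auto
  then have "ennreal (t powr (p-1)) * emeasure M {\<omega>\<in>space M. t < Z \<omega> \<and> P \<omega>}
      \<le> ennreal (t powr (p-1)) * ennreal (A * t powr (-a) + C * t powr (-b))"
    using E_le[of t] by (simp add: mult_left_mono)
  also have "\<dots> = ennreal (t powr (p-1) * (A * t powr (-a)) + t powr (p-1) * (C * t powr (-b)))"
    using A C by (simp add: ennreal_mult distrib_left)
  finally have head_le: "ennreal (t powr (p-1)) * emeasure M {\<omega>\<in>space M. t < Z \<omega> \<and> P \<omega>}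
      \<le> ennreal (t powr (p-1) * (A * t powr (-a)) + t powr (p-1) * (C * t powr (-b)))" .
  have "(\<integral>\<^sup>+x. ennreal ((p-1) * x powr (p-2)) * indicator {t..} x * emeasure M (?E x) \<partial>lborel)
      \<le> (\<integral>\<^sup>+x. ennreal ((p-1) * x powr (p-2)) * indicator {t..} x
            * ennreal (A * x powr (-a) + C * x powr (-b)) \<partial>lborel)"
    by (intro nn_integral_mono) (auto split: split_indicator intro: mult_left_mono E_le)
  also have "\<dots> = ennreal (A * (p-1) / (a+1-p) * t powr (p-1-a)) + ennreal (C * (p-1) / (b+1-p) * t powr (p-1-b))"
    by (rule nn_integral_powr_two_tails[OF A C a b p t])
  finally have tail_integral_le: "(\<integral>\<^sup>+x. ennreal ((p-1) * x powr (p-2)) * indicator {t..} x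
      * emeasure M (?E x) \<partial>lborel)
      \<le> ennreal (A * (p-1) / (a+1-p) * t powr (p-1-a)) + ennreal (C * (p-1) / (b+1-p) * t powr (p-1-b))" .
  have "(\<integral>\<^sup>+\<omega>. indicator {\<omega>. t < Z \<omega> \<and> P \<omega>} \<omega> * ennreal (Z \<omega> powr (p-1)) \<partial>M)
      \<le> ennreal (t powr (p-1) * (A * t powr (-a)) + t powr (p-1) * (C * t powr (-b)))
        + (ennreal (A * (p-1) / (a+1-p) * t powr (p-1-a)) + ennreal (C * (p-1) / (b+1-p) * t powr (p-1-b)))"
    unfolding nn_integral_indicator_powr_eq[OF assms(1,2) p t] by (rule add_mono[OF head_le tail_integral_le])
  also have "\<dots> = ennreal (A * (a / (a+1-p)) * t powr (p-1-a) + C * (b / (b+1-p)) * t powr (p-1-b))"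
  proof -
    have "0 \<le> t powr (p-1) * (A * t powr (-a)) + t powr (p-1) * (C * t powr (-b))"
      "0 \<le> A * (p-1) / (a+1-p) * t powr (p-1-a)" "0 \<le> C * (p-1) / (b+1-p) * t powr (p-1-b)"
      using A C a b p by auto
    moreover have "t powr (p-1) * (A * t powr (-a)) + t powr (p-1) * (C * t powr (-b))
        + (A * (p-1) / (a+1-p) * t powr (p-1-a) + C * (p-1) / (b+1-p) * t powr (p-1-b))
      = A * (a / (a+1-p)) * t powr (p-1-a) + C * (b / (b+1-p)) * t powr (p-1-b)"
      using powr_layer_cake_coeff[OF a, of t A] powr_layer_cake_coeff[OF b, of t C] by linarith
    ultimately show ?thesis by (simp add: ennreal_plus[symmetric] del: ennreal_plus)
  qed
  finally show ?thesis .
qed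

section \<open>Chernoff bound for truncated sums\<close>

lemma (in prob_space) expectation_exp_min_le:
  fixes X :: "'a \<Rightarrow> real"
  assumes [measurable]: "X \<in> borel_measurable M"
    and X: "integrable M X" and X2: "integrable M (\<lambda>\<omega>. (X \<omega>)\<^sup>2)" and mean0: "expectation X = 0"
    and h: "h > 0" and y: "y > 0"
  shows "expectation (\<lambda>\<omega>. exp (h * min (X \<omega>) y))
    \<le> 1 + (exp (h * y) - 1 - h * y) / y\<^sup>2 * expectation (\<lambda>\<omega>. (X \<omega>)\<^sup>2)"
proof -
  define K where "K = (exp (h * y) - 1 - h * y) / y\<^sup>2"
  have "0 \<le> exp (h * y) - 1 - h * y" using exp_ge_add_one_self[of "h * y"] by linarith
  then have K: "K \<ge> 0" by (simp add: K_def)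
  have "expectation (\<lambda>\<omega>. exp (h * min (X \<omega>) y)) \<le> expectation (\<lambda>\<omega>. 1 + h * X \<omega> + K * (X \<omega>)\<^sup>2)"
  proof (rule integral_mono)
    show "integrable M (\<lambda>\<omega>. exp (h * min (X \<omega>) y))"
      using h by (intro integrable_const_bound[where B="exp (h * y)"]) auto
    show "integrable M (\<lambda>\<omega>. 1 + h * X \<omega> + K * (X \<omega>)\<^sup>2)" using X X2 by auto
    fix \<omega>
    have "(min (X \<omega>) y)\<^sup>2 \<le> (X \<omega>)\<^sup>2"
      using y by (cases "X \<omega> \<le> y") (auto simp: min_def intro: power_mono)
    moreover have "exp (h * min (X \<omega>) y) \<le> 1 + h * min (X \<omega>) y + K * (min (X \<omega>) y)\<^sup>2"
      unfolding K_def using h y by (intro exp_mult_le_quadratic_of_le) auto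
    ultimately show "exp (h * min (X \<omega>) y) \<le> 1 + h * X \<omega> + K * (X \<omega>)\<^sup>2"
      using h K by (smt (verit) min.cobounded1 mult_left_mono)
  qed
  also have "\<dots> = 1 + K * expectation (\<lambda>\<omega>. (X \<omega>)\<^sup>2)"
    using X X2 mean0 by (simp add: prob_space)
  finally show ?thesis by (simp add: K_def)
qed

lemma (in prob_space) prob_sum_min_ge_le:
  fixes Y :: "nat \<Rightarrow> 'a \<Rightarrow> real"
  assumes Y: "\<And>k. k \<ge> 1 \<Longrightarrow> Y k \<in> borel_measurable M"
    and indep: "indep_vars (\<lambda>_. borel) Y {1..}"
    and ident: "\<And>k. k \<ge> 1 \<Longrightarrow> distr M borel (Y k) = distr M borel (Y 1)"
    and Y1: "integrable M (Y 1)" and Y2: "integrable M (\<lambda>\<omega>. (Y 1 \<omega>)\<^sup>2)"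
    and mean0: "expectation (Y 1) = 0"
    and h: "h > 0" and y: "y > 0"
  shows "prob {\<omega>\<in>space M. x \<le> (\<Sum>i=1..n. min (Y i \<omega>) y)}
    \<le> exp (-(h * x)) * (1 + (exp (h * y) - 1 - h * y) / y\<^sup>2 * expectation (\<lambda>\<omega>. (Y 1 \<omega>)\<^sup>2)) ^ n"
proof -
  define W where "W i \<omega> = exp (h * min (Y i \<omega>) y)" for i \<omega>
  have W_int: "integrable M (W i)" if "i \<ge> 1" for i
    unfolding W_def using Y[OF that] h by (intro integrable_const_bound[where B="exp (h * y)"]) auto
  have "indep_vars (\<lambda>_. borel) (\<lambda>i \<omega>. exp (h * min (Y i \<omega>) y)) {1..}"
    by (rule indep_vars_compose2[OF indep]) measurable
  then have W_indep: "indep_vars (\<lambda>_. borel) W {1..n}"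
    unfolding W_def by (rule indep_vars_subset) auto
  have W_ident: "expectation (W i) = expectation (W 1)" if "i \<ge> 1" for i
  proof -
    have "expectation (W i) = integral\<^sup>L (distr M borel (Y i)) (\<lambda>v. exp (h * min v y))"
      unfolding W_def using Y[OF that] by (simp add: integral_distr)
    also have "\<dots> = expectation (W 1)"
      unfolding W_def ident[OF that] using Y[of 1] by (simp add: integral_distr)
    finally show ?thesis .
  qed
  have "prob {\<omega>\<in>space M. x \<le> (\<Sum>i=1..n. min (Y i \<omega>) y)}
      = prob {\<omega>\<in>space M. exp (h * x) \<le> (\<Prod>i\<in>{1..n}. W i \<omega>)}"
  proof -
    have "(\<Prod>i\<in>{1..n}. W i \<omega>) = exp (h * (\<Sum>i=1..n. min (Y i \<omega>) y))" for \<omega>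
      by (simp add: W_def exp_sum sum_distrib_left)
    then show ?thesis using h by simp
  qed
  also have "\<dots> \<le> expectation (\<lambda>\<omega>. \<Prod>i\<in>{1..n}. W i \<omega>) / exp (h * x)"
    using indep_vars_integrable[OF _ W_indep] W_int
    by (intro integral_Markov_inequality_measure[where A="space M"]) (auto simp: W_def intro!: prod_nonneg)
  also have "expectation (\<lambda>\<omega>. \<Prod>i\<in>{1..n}. W i \<omega>) = (\<Prod>i\<in>{1..n}. expectation (W i))"
    using W_int by (intro indep_vars_lebesgue_integral[OF _ W_indep]) auto
  also have "\<dots> = (\<Prod>i\<in>{1..n}. expectation (W 1))"
    by (intro prod.cong refl W_ident) auto
  also have "\<dots> \<le> (1 + (exp (h * y) - 1 - h * y) / y\<^sup>2 * expectation (\<lambda>\<omega>. (Y 1 \<omega>)\<^sup>2)) ^ n"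
  proof -
    have "expectation (W 1) \<le> 1 + (exp (h * y) - 1 - h * y) / y\<^sup>2 * expectation (\<lambda>\<omega>. (Y 1 \<omega>)\<^sup>2)"
      unfolding W_def by (rule expectation_exp_min_le[OF Y Y1 Y2 mean0 h y]) simp
    moreover have "0 \<le> expectation (W 1)" unfolding W_def by simp
    ultimately show ?thesis by (simp add: power_mono)
  qed
  finally show ?thesis
    by (simp add: exp_minus divide_inverse mult.commute)
qed

text \<open>This \<open>h\<close> minimises the exponent \<open>-h x + n B (exp (h y) - 1 - h y) / y\<^sup>2\<close>
  of the bound after \<open>1 + v \<le> exp v\<close> (the choice of Fuk and Nagaev).\<close>

lemma chernoff_exponent_at_optimum_le:
  fixes B x r :: real and n :: nat
  assumes B: "B > 0" and x: "x > 0" and r: "r > 0" and n: "n \<ge> 1"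
  defines "y \<equiv> x / r"
  defines "h \<equiv> ln (1 + x * y / (real n * B)) / y"
  shows "-(h * x) + real n * ((exp (h * y) - 1 - h * y) / y\<^sup>2 * B) \<le> r * ln (exp 1 * r * B * real n / x\<^sup>2)"
proof -
  define L where "L = ln (1 + x * y / (real n * B))"
  define D where "D = exp 1 * r * B * real n / x\<^sup>2"
  have y: "y > 0" and N: "real n > 0" and D: "D > 0"
    using x r n B by (simp_all add: y_def D_def)
  have ratio: "x * y / (real n * B) = exp 1 / D"
    using x r N B by (simp add: D_def y_def field_simps power2_eq_square)
  have q: "exp 1 / D > 0" using D by simp
  then have L0: "L \<ge> 0" by (simp add: L_def ratio)
  have hy: "h * y = L" and hx: "h * x = r * L"
    using x r y by (simp_all add: h_def L_def y_def field_simps)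
  have "exp (h * y) = 1 + x * y / (real n * B)"
    unfolding hy L_def ratio using q by simp
  then have "real n * ((exp (h * y) - 1 - h * y) / y\<^sup>2 * B) = (x * y - real n * B * L) / y\<^sup>2"
    using N B by (simp add: hy field_simps)
  also have "\<dots> = r - real n * B * L / y\<^sup>2"
    using x r y by (simp add: y_def field_simps power2_eq_square)
  finally have nKB: "real n * ((exp (h * y) - 1 - h * y) / y\<^sup>2 * B) = r - real n * B * L / y\<^sup>2" .
  have "L \<ge> ln (exp 1 / D)"
    unfolding L_def ratio using q by simp
  then have "r * 1 \<le> r * (L + ln D)"
    using D r by (intro mult_left_mono) (auto simp: ln_div)
  moreover have "0 \<le> real n * B * L / y\<^sup>2" using B L0 by simp
  ultimately show ?thesis unfolding hx nKB D_def[symmetric] by (simp add: distrib_left)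
qed

lemma chernoff_bound_at_optimum_le:
  fixes B x r :: real and n :: nat
  assumes B: "B > 0" and x: "x > 0" and r: "r > 0" and n: "n \<ge> 1"
  defines "y \<equiv> x / r"
  defines "h \<equiv> ln (1 + x * y / (real n * B)) / y"
  shows "exp (-(h * x)) * (1 + (exp (h * y) - 1 - h * y) / y\<^sup>2 * B) ^ n
    \<le> (exp 1 * r * B) powr r * real n powr r * x powr (-(2 * r))"
proof -
  define K where "K = (exp (h * y) - 1 - h * y) / y\<^sup>2"
  define D where "D = exp 1 * r * B * real n / x\<^sup>2"
  have "0 \<le> exp (h * y) - 1 - h * y" using exp_ge_add_one_self[of "h * y"] by linarith
  then have K: "K \<ge> 0" by (simp add: K_def)
  have "(1 + K * B) ^ n \<le> exp (K * B) ^ n"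
    using K B by (intro power_mono exp_ge_add_one_self) simp
  also have "\<dots> = exp (real n * (K * B))"
    by (simp add: exp_of_nat_mult[symmetric])
  finally have "exp (-(h * x)) * (1 + K * B) ^ n \<le> exp (-(h * x)) * exp (real n * (K * B))"
    by simp
  also have "\<dots> = exp (-(h * x) + real n * (K * B))"
    by (rule exp_add[symmetric])
  also have "\<dots> \<le> exp (r * ln D)"
    using chernoff_exponent_at_optimum_le[OF B x r n] unfolding K_def D_def y_def h_def by simp
  also have "\<dots> = D powr r"
    using x r B n by (simp add: powr_def D_def)
  also have "\<dots> = (exp 1 * r * B) powr r * real n powr r / (x powr 2) powr r"
    using x r B powr_realpow[OF x, of 2] unfolding D_def by (simp add: powr_mult powr_divide)
  also have "\<dots> = (exp 1 * r * B) powr r * real n powr r * x powr (-(2 * r))"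
    by (simp add: powr_powr powr_minus_divide)
  finally show ?thesis by (simp add: K_def)
qed

lemma (in prob_space) prob_sum_min_ge_le_powr:
  fixes Y :: "nat \<Rightarrow> 'a \<Rightarrow> real"
  assumes Y: "\<And>k. k \<ge> 1 \<Longrightarrow> Y k \<in> borel_measurable M"
    and indep: "indep_vars (\<lambda>_. borel) Y {1..}"
    and ident: "\<And>k. k \<ge> 1 \<Longrightarrow> distr M borel (Y k) = distr M borel (Y 1)"
    and Y1: "integrable M (Y 1)" and Y2: "integrable M (\<lambda>\<omega>. (Y 1 \<omega>)\<^sup>2)"
    and mean0: "expectation (Y 1) = 0"
    and r: "r > 0" and x: "x > 0" and n: "n \<ge> 1"
  shows "prob {\<omega>\<in>space M. x \<le> (\<Sum>i=1..n. min (Y i \<omega>) (x / r))}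
    \<le> (exp 1 * r * expectation (\<lambda>\<omega>. (Y 1 \<omega>)\<^sup>2)) powr r * real n powr r * x powr (-(2 * r))"
proof -
  let ?G = "{\<omega>\<in>space M. x \<le> (\<Sum>i=1..n. min (Y i \<omega>) (x / r))}"
  let ?B = "expectation (\<lambda>\<omega>. (Y 1 \<omega>)\<^sup>2)"
  have chernoff: "prob ?G \<le> exp (-(h * x)) * (1 + (exp (h * (x / r)) - 1 - h * (x / r)) / (x / r)\<^sup>2 * ?B) ^ n"
    if "h > 0" for h
    using x r by (intro prob_sum_min_ge_le[OF Y indep ident Y1 Y2 mean0 that]) auto
  show ?thesis
  proof (cases "?B = 0")
    case False
    then have B: "?B > 0" by (simp add: less_le)
    have "0 < x * (x / r) / (real n * ?B)" using B x r n by simp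
    then have "0 < ln (1 + x * (x / r) / (real n * ?B)) / (x / r)"
      using x r by (intro divide_pos_pos ln_gt_zero) auto
    from order_trans[OF chernoff[OF this] chernoff_bound_at_optimum_le[OF B x r n]]
    show ?thesis .
  next
    case True
    \<comment> \<open>without variance the Chernoff bound is \<open>exp (-(h * x))\<close> for every \<open>h > 0\<close>\<close>
    have "prob ?G \<le> 0"
    proof (rule ccontr)
      assume "\<not> prob ?G \<le> 0"
      then have G: "prob ?G > 0" by simp
      define h where "h = (\<bar>ln (prob ?G)\<bar> + 1) / x"
      have "h * x = \<bar>ln (prob ?G)\<bar> + 1" using x by (simp add: h_def)
      then have "-(h * x) < ln (prob ?G)" by linarith
      then have "exp (-(h * x)) < exp (ln (prob ?G))" by (rule exp_less_mono)
      then have "exp (-(h * x)) < prob ?G" unfolding exp_ln[OF G] .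
      moreover have "h > 0" using x by (simp add: h_def)
      ultimately show False using chernoff[of h] True by simp
    qed
    then show ?thesis using True r by simp
  qed
qed

section \<open>Tail of the stopped sum\<close>

text \<open>The events on the right use \<open>\<sigma> > i - 1\<close> instead of \<open>\<sigma> > n\<close>: that event
  belongs to \<open>F (i - 1)\<close> and hence is independent of \<open>Y i\<close>.\<close>

lemma (in prob_space) prob_stopped_sum_ge_le:
  fixes Y :: "nat \<Rightarrow> 'a \<Rightarrow> real" and \<sigma> :: "'a \<Rightarrow> enat"
  assumes Y: "\<And>k. k \<ge> 1 \<Longrightarrow> Y k \<in> borel_measurable M"
    and \<sigma>[measurable]: "\<And>k. Measurable.pred M (\<lambda>\<omega>. enat k < \<sigma> \<omega>)"
  shows "prob {\<omega>\<in>space M. enat n < \<sigma> \<omega> \<and> x \<le> (\<Sum>i=1..n. Y i \<omega>)}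
    \<le> (\<Sum>i=1..n. prob {\<omega>\<in>space M. y < Y i \<omega> \<and> enat (i - 1) < \<sigma> \<omega>})
      + prob {\<omega>\<in>space M. x \<le> (\<Sum>i=1..n. min (Y i \<omega>) y)}"
proof -
  define E where "E i = {\<omega>\<in>space M. y < Y i \<omega> \<and> enat (i - 1) < \<sigma> \<omega>}" for i
  define G where "G = {\<omega>\<in>space M. x \<le> (\<Sum>i=1..n. min (Y i \<omega>) y)}"
  have E: "E i \<in> events" if "i \<ge> 1" for i
  proof -
    have [measurable]: "Y i \<in> borel_measurable M" using Y[OF that] .
    show ?thesis unfolding E_def by measurable
  qed
  have "(\<lambda>\<omega>. \<Sum>i=1..n. min (Y i \<omega>) y) \<in> borel_measurable M"
    by (intro borel_measurable_sum borel_measurable_min) (auto intro: Y)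
  then have G: "G \<in> events" unfolding G_def by measurable
  have "{\<omega>\<in>space M. enat n < \<sigma> \<omega> \<and> x \<le> (\<Sum>i=1..n. Y i \<omega>)} \<subseteq> (\<Union>i\<in>{1..n}. E i) \<union> G"
  proof
    fix \<omega> assume \<omega>: "\<omega> \<in> {\<omega>\<in>space M. enat n < \<sigma> \<omega> \<and> x \<le> (\<Sum>i=1..n. Y i \<omega>)}"
    show "\<omega> \<in> (\<Union>i\<in>{1..n}. E i) \<union> G"
    proof (cases "\<forall>i\<in>{1..n}. Y i \<omega> \<le> y")
      case True
      then have "(\<Sum>i=1..n. min (Y i \<omega>) y) = (\<Sum>i=1..n. Y i \<omega>)" by (intro sum.cong) auto
      then show ?thesis using \<omega> by (auto simp: G_def)
    next
      case False
      then obtain i where i: "i \<in> {1..n}" "y < Y i \<omega>" by auto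
      have "i - 1 \<le> n" using i by auto
      then have "enat (i - 1) \<le> enat n" by simp
      then have "enat (i - 1) < \<sigma> \<omega>" using \<omega> le_less_trans by blast
      then show ?thesis using \<omega> i by (auto simp: E_def)
    qed
  qed
  then have "prob {\<omega>\<in>space M. enat n < \<sigma> \<omega> \<and> x \<le> (\<Sum>i=1..n. Y i \<omega>)} \<le> prob ((\<Union>i\<in>{1..n}. E i) \<union> G)"
    using E G by (intro finite_measure_mono) auto
  also have "\<dots> \<le> prob (\<Union>i\<in>{1..n}. E i) + prob G"
    using E G by (intro measure_Un_le) auto
  also have "prob (\<Union>i\<in>{1..n}. E i) \<le> (\<Sum>i\<in>{1..n}. prob (E i))"
    using E by (intro finite_measure_subadditive_finite) auto
  finally show ?thesis by (simp add: E_def G_def)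
qed

lemma (in prob_space) prob_vimage_inter_indep_set:
  fixes X X' :: "'a \<Rightarrow> real"
  assumes X: "X \<in> borel_measurable M" and X': "X' \<in> borel_measurable M"
    and distr_eq: "distr M borel X = distr M borel X'"
    and indep: "indep_set {X -` A \<inter> space M | A. A \<in> sets borel} G"
    and S: "S \<in> G" and B: "B \<in> sets borel"
  shows "prob (X -` B \<inter> space M \<inter> S) = prob (X' -` B \<inter> space M) * prob S"
proof -
  have "prob (X -` B \<inter> space M \<inter> S) = prob (X -` B \<inter> space M) * prob S"
    using B by (intro indep_setD[OF indep _ S]) auto
  also have "prob (X -` B \<inter> space M) = prob (X' -` B \<inter> space M)"
    using measure_distr[OF X B] measure_distr[OF X' B] distr_eq by simp
  finally show ?thesis .
qed

lemma (in finite_measure) integrable_square_of_integrable_abs_powr: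
  fixes X :: "'a \<Rightarrow> real"
  assumes [measurable]: "X \<in> borel_measurable M"
    and X: "integrable M (\<lambda>\<omega>. \<bar>X \<omega>\<bar> powr q)" and q: "q \<ge> 2"
  shows "integrable M (\<lambda>\<omega>. (X \<omega>)\<^sup>2)"
proof (rule Bochner_Integration.integrable_bound)
  show "integrable M (\<lambda>\<omega>. 1 + \<bar>X \<omega>\<bar> powr q)" using X by simp
  have "(X \<omega>)\<^sup>2 \<le> 1 + \<bar>X \<omega>\<bar> powr q" for \<omega>
  proof (cases "\<bar>X \<omega>\<bar> \<le> 1")
    case True
    then show ?thesis using abs_square_le_1[of "X \<omega>"] powr_ge_zero[of "\<bar>X \<omega>\<bar>" q] by linarith
  next
    case False
    then have "(X \<omega>)\<^sup>2 = \<bar>X \<omega>\<bar> powr 2" by (simp add: powr_realpow[symmetric])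
    also have "\<dots> \<le> \<bar>X \<omega>\<bar> powr q" using False q by (intro powr_mono) auto
    finally show ?thesis by simp
  qed
  then show "AE \<omega> in M. norm ((X \<omega>)\<^sup>2) \<le> norm (1 + \<bar>X \<omega>\<bar> powr q)" by simp
qed measurable

lemma (in prob_space) prob_less_le_moment:
  fixes X :: "'a \<Rightarrow> real"
  assumes [measurable]: "X \<in> borel_measurable M"
    and X: "integrable M (\<lambda>\<omega>. \<bar>X \<omega>\<bar> powr q)" and q: "q \<ge> 0" and y: "y > 0"
  shows "prob {\<omega>\<in>space M. y < X \<omega>} \<le> expectation (\<lambda>\<omega>. \<bar>X \<omega>\<bar> powr q) / y powr q"
proof -
  have "{\<omega>\<in>space M. y powr q \<le> \<bar>X \<omega>\<bar> powr q} \<in> events" by measurable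
  moreover have "{\<omega>\<in>space M. y < X \<omega>} \<subseteq> {\<omega>\<in>space M. y powr q \<le> \<bar>X \<omega>\<bar> powr q}"
    using y q by (auto intro!: powr_mono2)
  ultimately have "prob {\<omega>\<in>space M. y < X \<omega>} \<le> prob {\<omega>\<in>space M. y powr q \<le> \<bar>X \<omega>\<bar> powr q}"
    by (rule finite_measure_mono[rotated])
  also have "\<dots> \<le> expectation (\<lambda>\<omega>. \<bar>X \<omega>\<bar> powr q) / y powr q"
    using y by (intro integral_Markov_inequality_measure[OF X, where A="space M"]) auto
  finally show ?thesis .
qed

lemma (in prob_space) prob_stopped_sum_ge_le_powr:
  fixes Y :: "nat \<Rightarrow> 'a \<Rightarrow> real" and F :: "nat \<Rightarrow> 'a measure" and \<sigma> :: "'a \<Rightarrow> enat"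
  assumes Y: "\<And>k. k \<ge> 1 \<Longrightarrow> Y k \<in> borel_measurable M"
    and indep: "indep_vars (\<lambda>_. borel) Y {1..}"
    and ident: "\<And>k. k \<ge> 1 \<Longrightarrow> distr M borel (Y k) = distr M borel (Y 1)"
    and mean0: "expectation (Y 1) = 0"
    and q: "q \<ge> 2" and moment: "integrable M (\<lambda>\<omega>. \<bar>Y 1 \<omega>\<bar> powr q)"
    and F: "\<And>k. sets (F k) \<subseteq> sets M"
    and indep_past: "\<And>k. k \<ge> 1 \<Longrightarrow>
      indep_set {Y k -` A \<inter> space M | A. A \<in> sets borel} (sets (F (k - 1)))"
    and \<sigma>: "\<And>k. {\<omega>\<in>space M. enat k < \<sigma> \<omega>} \<in> sets (F k)"
    and r: "r > 0" and x: "x > 0" and n: "n \<ge> 1"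
  shows "prob {\<omega>\<in>space M. enat n < \<sigma> \<omega> \<and> x \<le> (\<Sum>i=1..n. Y i \<omega>)}
    \<le> r powr q * expectation (\<lambda>\<omega>. \<bar>Y 1 \<omega>\<bar> powr q)
        * (\<Sum>i=1..n. prob {\<omega>\<in>space M. enat (i - 1) < \<sigma> \<omega>}) * x powr (-q)
      + (exp 1 * r * expectation (\<lambda>\<omega>. (Y 1 \<omega>)\<^sup>2)) powr r * real n powr r * x powr (-(2 * r))"
proof -
  let ?Q = "expectation (\<lambda>\<omega>. \<bar>Y 1 \<omega>\<bar> powr q)"
  let ?S = "\<lambda>i. {\<omega>\<in>space M. enat (i - 1) < \<sigma> \<omega>}"
  have Y1_meas[measurable]: "Y 1 \<in> borel_measurable M" using Y by simp
  have Y2: "integrable M (\<lambda>\<omega>. (Y 1 \<omega>)\<^sup>2)"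
    by (rule integrable_square_of_integrable_abs_powr[OF Y1_meas moment q])
  have Y1: "integrable M (Y 1)"
    by (rule square_integrable_imp_integrable[OF Y1_meas Y2])
  have \<sigma>_pred: "Measurable.pred M (\<lambda>\<omega>. enat k < \<sigma> \<omega>)" for k
    using \<sigma> F unfolding pred_def by blast
  have "prob {\<omega>\<in>space M. x / r < Y 1 \<omega>} \<le> ?Q / (x / r) powr q"
    using x r q by (intro prob_less_le_moment[OF Y1_meas moment]) auto
  also have "\<dots> = r powr q * ?Q * x powr (-q)"
    using x r by (simp add: powr_divide powr_minus_divide)
  finally have exceed: "prob {\<omega>\<in>space M. x / r < Y 1 \<omega>} \<le> r powr q * ?Q * x powr (-q)" .
  have "prob {\<omega>\<in>space M. x / r < Y i \<omega> \<and> enat (i - 1) < \<sigma> \<omega>} \<le> r powr q * ?Q * x powr (-q) * prob (?S i)"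
    if i: "i \<in> {1..n}" for i
  proof -
    have "prob (Y i -` {x / r<..} \<inter> space M \<inter> ?S i) = prob (Y 1 -` {x / r<..} \<inter> space M) * prob (?S i)"
      using i by (intro prob_vimage_inter_indep_set[OF Y Y1_meas ident indep_past \<sigma>]) auto
    moreover have "Y i -` {x / r<..} \<inter> space M \<inter> ?S i = {\<omega>\<in>space M. x / r < Y i \<omega> \<and> enat (i - 1) < \<sigma> \<omega>}"
      "Y 1 -` {x / r<..} \<inter> space M = {\<omega>\<in>space M. x / r < Y 1 \<omega>}"
      by auto
    ultimately show ?thesis using exceed by (simp add: mult_right_mono)
  qed
  then have "(\<Sum>i=1..n. prob {\<omega>\<in>space M. x / r < Y i \<omega> \<and> enat (i - 1) < \<sigma> \<omega>})
      \<le> (\<Sum>i=1..n. r powr q * ?Q * x powr (-q) * prob (?S i))"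
    by (rule sum_mono)
  also have "\<dots> = r powr q * ?Q * x powr (-q) * (\<Sum>i=1..n. prob (?S i))"
    by (rule sum_distrib_left[symmetric])
  also have "\<dots> = r powr q * ?Q * (\<Sum>i=1..n. prob (?S i)) * x powr (-q)"
    by (simp only: mult_ac)
  finally show ?thesis
    using prob_stopped_sum_ge_le[where Y=Y and \<sigma>=\<sigma> and n=n and x=x and y="x / r", OF Y \<sigma>_pred] prob_sum_min_ge_le_powr[OF Y indep ident Y1 Y2 mean0 r x n]
    by linarith
qed

lemma stopping_time_enat_less_sets:
  assumes "stopping_time_enat F \<sigma>"
  shows "{\<omega>\<in>space (F k). enat k < \<sigma> \<omega>} \<in> sets (F k)"
proof -
  have [measurable]: "Measurable.pred (F k) (\<lambda>\<omega>. \<sigma> \<omega> \<le> enat k)"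
    using assms unfolding stopping_time_enat_def by blast
  have "Measurable.pred (F k) (\<lambda>\<omega>. \<not> \<sigma> \<omega> \<le> enat k)" by measurable
  then show ?thesis by (simp add: not_le pred_def)
qed

theorem lemma4:
  fixes M :: "'a measure" and Y :: "nat \<Rightarrow> 'a \<Rightarrow> real" and F :: "nat \<Rightarrow> 'a measure"
    and \<sigma> :: "'a \<Rightarrow> enat" and p q r t :: real and n :: nat
  assumes M: "prob_space M"
    and Y_rv: "\<And>k. k \<ge> 1 \<Longrightarrow> Y k \<in> borel_measurable M"
    and Y_indep: "prob_space.indep_vars M (\<lambda>_. borel) Y {1..}"
    and Y_ident: "\<And>k. k \<ge> 1 \<Longrightarrow> distr M borel (Y k) = distr M borel (Y 1)"
    and mean0: "prob_space.expectation M (Y 1) = 0"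
    and p: "p \<ge> 1"
    and q: "q \<ge> max p 2"
    and moment: "integrable M (\<lambda>x. \<bar>Y 1 x\<bar> powr q)"
    and filt: "filtration (space M) F"
    and filt_sub: "\<And>k. sets (F k) \<subseteq> sets M"
    and Y_adapted: "\<And>k. k \<ge> 1 \<Longrightarrow> Y k \<in> borel_measurable (F k)"
    and Y_indep_past: "\<And>k. k \<ge> 1 \<Longrightarrow>
        prob_space.indep_set M {Y k -` A \<inter> space M | A. A \<in> sets borel} (sets (F (k - 1)))"
    and stop: "stopping_time_enat F \<sigma>"
    and r: "r > max ((p - 1) / 2) 1"
    and t: "t > 0"
    and n: "n \<ge> 1"
  defines "T \<equiv> \<lambda>m x. \<Sum>i=1..m. Y i x"
  shows "prob_space.expectation M
           (\<lambda>x. indicator {x. T n x > t \<and> \<sigma> x > enat n} x * T n x powr (p - 1))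
     \<le> r powr q * (q / (q + 1 - p)) * prob_space.expectation M (\<lambda>x. \<bar>Y 1 x\<bar> powr q)
         * t powr (p - 1 - q) * (\<Sum>i=1..n. prob_space.prob M {x \<in> space M. \<sigma> x > enat (i - 1)})
       + (exp 1 * r * prob_space.expectation M (\<lambda>x. (Y 1 x)\<^sup>2)) powr r * real n powr r
         * (2 * r / (2 * r + 1 - p)) * t powr (p - 1 - 2 * r)"
proof -
  interpret prob_space M by (rule M)
  let ?A = "r powr q * expectation (\<lambda>x. \<bar>Y 1 x\<bar> powr q) * (\<Sum>i=1..n. prob {x \<in> space M. enat (i - 1) < \<sigma> x})"
  let ?C = "(exp 1 * r * expectation (\<lambda>x. (Y 1 x)\<^sup>2)) powr r * real n powr r"
  let ?R = "?A * (q / (q + 1 - p)) * t powr (p - 1 - q) + ?C * (2 * r / (2 * r + 1 - p)) * t powr (p - 1 - 2 * r)"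
  have q2: "q \<ge> 2" and qp: "q > p - 1" and r0: "r > 0" and rp: "2 * r > p - 1" using q r by auto
  have A: "?A \<ge> 0" and C: "?C \<ge> 0" by (auto intro!: mult_nonneg_nonneg sum_nonneg)
  have R: "?R \<ge> 0"
    using qp rp r0 q2 by (auto intro!: add_nonneg_nonneg mult_nonneg_nonneg divide_nonneg_nonneg sum_nonneg)
  have \<sigma>_F: "{\<omega>\<in>space M. enat k < \<sigma> \<omega>} \<in> sets (F k)" for k
    using stopping_time_enat_less_sets[OF stop, of k] filtration.space_F[OF filt, of k] by simp
  have \<sigma>_pred: "Measurable.pred M (\<lambda>\<omega>. enat n < \<sigma> \<omega>)"
    using \<sigma>_F filt_sub unfolding pred_def by blast
  have T_meas: "T n \<in> borel_measurable M"
    unfolding T_def by (intro borel_measurable_sum) (auto intro: Y_rv)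
  have tail: "prob {\<omega>\<in>space M. enat n < \<sigma> \<omega> \<and> x \<le> T n \<omega>} \<le> ?A * x powr (-q) + ?C * x powr (-(2 * r))"
    if "t \<le> x" for x
    unfolding T_def using that t
    by (intro prob_stopped_sum_ge_le_powr[OF Y_rv Y_indep Y_ident mean0 q2 moment filt_sub Y_indep_past \<sigma>_F r0 _ n]) auto
  have "(\<integral>\<^sup>+\<omega>. ennreal (indicator {x. T n x > t \<and> \<sigma> x > enat n} \<omega> * T n \<omega> powr (p - 1)) \<partial>M)
      = (\<integral>\<^sup>+\<omega>. indicator {\<omega>. t < T n \<omega> \<and> enat n < \<sigma> \<omega>} \<omega> * ennreal (T n \<omega> powr (p - 1)) \<partial>M)"
    by (intro nn_integral_cong) (simp add: indicator_def)
  also have "\<dots> \<le> ennreal ?R"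
    using tail by (rule nn_integral_indicator_powr_le[OF T_meas \<sigma>_pred p t A C qp rp])
  finally have "expectation (\<lambda>x. indicator {x. T n x > t \<and> \<sigma> x > enat n} x * T n x powr (p - 1)) \<le> ?R"
    by (rule integral_real_bounded[OF R])
  then show ?thesis by (simp add: mult_ac)
qed

end
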